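(* Let $\mathcal C$ be a concept hierarchy, $r_1,r_2,\epsilon\in[0,1]$, $a>0$ a real with $r_1\le ar_2(1-\epsilon)$, $m$ a positive integer, and let $\mathcal A_2$ and $\mathcal L$ be the networks defined below (with $\mathcal L$ having fixed sets $F$ and $E$ satisfying the stated constraints). Then $\mathcal L$ $implements_2$ $\mathcal A_2$: for every $B\subseteq C_0$, in the executions of $\mathcal A_2$ and $\mathcal L$ on input $B$, for every concept $c$, if $rep(c)$ does not fire at time $level(c)$ in $\mathcal A_2$, then no neuron in $reps(c)$ fires at time $level(c)$ in $\mathcal L$.
   Context: Concept hierarchies: fix positive integers $\ell_{max},n,k$. A universal set $D$ of concepts is partitioned into disjoint sets $D_0,\dots,D_{\ell_{max}}$ with $|D_0|=n$; $level(c)=\ell$ for $c\in D_\ell$. A concept hierarchy $\mathcal C$ consists of $C\subseteq D$, with $C_\ell=C\cap D_\ell$, and for each $c\in C_\ell$ with $1\le\ell\le\ell_{max}$ a set $children(c)\subseteq C_{\ell-1}$, such that $|C_{\ell_{max}}|=k$, $|children(c)|=k$ for all such $c$, and $children(c)\cap children(c')=\emptyset$ for distinct $c,c'\in C_\ell$. Common network dynamics: neurons partitioned into layers $N_0,\dots,N_{\ell_{max}}$; threshold $\tau$; weights $w(u,v)\in\{0,1\}$ for $u\in N_{\ell-1}$, $v\in N_\ell$. Failed neurons never fire. A non-failed neuron $v\in N_\ell$, $\ell\ge1$, does not fire at time 0 and fires at time $t\ge1$ iff $\sum_{u\in N_{\ell-1}}w(u,v)x_u(t-1)\ge\tau$,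 where $x_u(s)\in\{0,1\}$ indicates whether $u$ fires at time $s$. $\mathcal A_2$: no failures; each $c\in D_0$ has $rep(c)\in N_0$, each $c\in C$ with $level(c)\ge1$ has $rep(c)\in N_{level(c)}$, all distinct; $w(u,v)=1$ iff $v=rep(c)$, $u=rep(c')$ for a child $c'$ of $c$, else $0$; $\tau=r_1k$. Input $B\subseteq C_0$: the layer-0 neurons $rep(b)$, $b\in B$, fire at time 0, no other layer-0 neuron fires at time 0, and no layer-0 neuron fires at any other time. $\mathcal L$: each $c\in D_0$ has a set $reps(c)$ of $m$ neurons in $N_0$, each $c\in C$ with $level(c)\ge1$ a set $reps(c)$ of $m$ neurons in $N_{level(c)}$, all pairwise disjoint. $E$ is a set of pairs $(u,v)$ with $v\in reps(c)$ and $u\in reps(c')$ for some child $c'$ of $c$; $w(u,v)=1$ iff $(u,v)\in E$, else $0$. Threshold $\tau=ar_2km(1-\epsilon)$. A fixed set $F$ of neurons is failed. Constraints: for every concept $c$, at least $m(1-\epsilon)$ neurons of $reps(c)$ are not in $F$; and for every $c$ with $level(c)\ge1$, every $v\in reps(c)$ and every child $c'$ of $c$, there are at least $am(1-\epsilon)$ neurons $u\in reps(c')\setminus F$ with $(u,v)\in E$. Input $B\subseteq C_0$: a layer-0 neuron fires at time 0 iff it is in $\bigcup_{b\in B}reps(b)\setminus F$, and no layer-0 neuron fires at any other time. *)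

theory Defs
  imports Complex_Main
begin

definition concept_hierarchy ::
  "'c set \<Rightarrow> ('c \<Rightarrow> nat) \<Rightarrow> nat \<Rightarrow> nat \<Rightarrow> nat \<Rightarrow> 'c set \<Rightarrow> ('c \<Rightarrow> 'c set) \<Rightarrow> bool" where
  "concept_hierarchy D level lmax n k C children \<longleftrightarrow>
     lmax \<ge> 1 \<and> n \<ge> 1 \<and> k \<ge> 1 \<and>
     (\<forall>c\<in>D. level c \<le> lmax) \<and>
     finite {c\<in>D. level c = 0} \<and> card {c\<in>D. level c = 0} = n \<and>
     C \<subseteq> D \<and>
     finite {c\<in>C. level c = lmax} \<and> card {c\<in>C. level c = lmax} = k \<and>
     (\<forall>c\<in>C. 1 \<le> level c \<longrightarrow>
        children c \<subseteq> {c'\<in>C. level c' = level c - 1} \<and>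
        finite (children c) \<and> card (children c) = k) \<and>
     (\<forall>c\<in>C. \<forall>c'\<in>C. 1 \<le> level c \<longrightarrow> level c' = level c \<longrightarrow> c \<noteq> c' \<longrightarrow>
        children c \<inter> children c' = {})"

text \<open>A network: finite neuron set N, layer function lay, weights w, threshold tau,
  failed set F and the set I of layer-0 neurons that fire at time 0.
  fires ... v t holds iff neuron v fires at time t.\<close>

primrec fires ::
  "'n set \<Rightarrow> ('n \<Rightarrow> nat) \<Rightarrow> ('n \<Rightarrow> 'n \<Rightarrow> real) \<Rightarrow> real \<Rightarrow> 'n set \<Rightarrow> 'n set \<Rightarrow> 'n \<Rightarrow> nat \<Rightarrow> bool"
where
  "fires N lay w tau F I v 0 = (v \<in> N \<and> v \<notin> F \<and> lay v = 0 \<and> v \<in> I)"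
| "fires N lay w tau F I v (Suc t) =
     (v \<in> N \<and> v \<notin> F \<and> 1 \<le> lay v \<and>
      (\<Sum>u\<in>{u\<in>N. lay u + 1 = lay v}. w u v * (if fires N lay w tau F I u t then 1 else 0)) \<ge> tau)"

definition rep_concepts :: "'c set \<Rightarrow> ('c \<Rightarrow> nat) \<Rightarrow> 'c set \<Rightarrow> 'c set" where
  "rep_concepts D level C = {c\<in>D. level c = 0} \<union> {c\<in>C. 1 \<le> level c}"

definition A2_weight ::
  "('c \<Rightarrow> nat) \<Rightarrow> 'c set \<Rightarrow> ('c \<Rightarrow> 'c set) \<Rightarrow> ('c \<Rightarrow> 'n) \<Rightarrow> 'n \<Rightarrow> 'n \<Rightarrow> real" where
  "A2_weight level C children rep u v =
     (if \<exists>c\<in>C. 1 \<le> level c \<and> v = rep c \<and> (\<exists>c'\<in>children c. u = rep c') then 1 else 0)"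

definition L_weight :: "('n \<times> 'n) set \<Rightarrow> 'n \<Rightarrow> 'n \<Rightarrow> real" where
  "L_weight E u v = (if (u, v) \<in> E then 1 else 0)"

end

theory Submission
  imports Defs
begin

text \<open>Both networks have 0/1 weights, so a neuron fires at time t+1 iff at least
  threshold-many of its in-neighbours fire at time t. Induction on the level:
  every in-neighbour of a neuron of reps c lies in reps c' for a child c' of c,
  and by induction hypothesis it can only fire if rep c' fires in A_2. If rep c
  stays silent, fewer than r_1 k children fire, so fewer than m r_1 k in-neighbours
  fire in L, and m r_1 k does not exceed the threshold a r_2 k m (1 - \<epsilon>) of L.
  Only the absence of spurious firing is claimed.\<close>

lemma fires_Suc_of_bool_weights:
  assumes "finite N"
  shows "fires N lay (\<lambda>u v. of_bool (R u v)) \<tau> F I v (Suc t) \<longleftrightarrow>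
           v \<in> N \<and> v \<notin> F \<and> 1 \<le> lay v \<and>
           \<tau> \<le> real (card {u\<in>N. lay u + 1 = lay v \<and> R u v \<and>
                               fires N lay (\<lambda>u v. of_bool (R u v)) \<tau> F I u t})"
proof -
  let ?fires = "fires N lay (\<lambda>u v. of_bool (R u v)) \<tau> F I"
  have "(\<Sum>u\<in>{u\<in>N. lay u + 1 = lay v}. of_bool (R u v) * (if ?fires u t then 1 else 0))
          = (\<Sum>u\<in>{u\<in>N. lay u + 1 = lay v}. of_bool (R u v \<and> ?fires u t) :: real)"
    by (intro sum.cong) auto
  also have "\<dots> = real (card {u\<in>N. lay u + 1 = lay v \<and> R u v \<and> ?fires u t})"
    using assms by (simp add: Int_def conj_assoc)
  finally show ?thesis by simp
qed

lemma A2_weight_eq: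
  "A2_weight level C children rep =
     (\<lambda>u v. of_bool (\<exists>c\<in>C. 1 \<le> level c \<and> v = rep c \<and> (\<exists>c'\<in>children c. u = rep c')))"
  by (simp add: fun_eq_iff A2_weight_def)

lemma L_weight_eq: "L_weight E = (\<lambda>u v. of_bool ((u, v) \<in> E))"
  by (simp add: fun_eq_iff L_weight_def)

locale hierarchy_networks =
  fixes D C :: "'c set" and level :: "'c \<Rightarrow> nat" and children :: "'c \<Rightarrow> 'c set"
    and N1 :: "'n set" and lay1 :: "'n \<Rightarrow> nat" and rep :: "'c \<Rightarrow> 'n"
    and N2 :: "'m set" and lay2 :: "'m \<Rightarrow> nat" and reps :: "'c \<Rightarrow> 'm set"
    and E :: "('m \<times> 'm) set" and m :: nat
  assumes C_sub: "C \<subseteq> D"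
    and children_sub: "\<And>c. c \<in> C \<Longrightarrow> 1 \<le> level c \<Longrightarrow>
                         children c \<subseteq> {c'\<in>C. level c' = level c - 1}"
    and finite_children: "\<And>c. c \<in> C \<Longrightarrow> 1 \<le> level c \<Longrightarrow> finite (children c)"
    and finite_N1: "finite N1"
    and rep_in: "\<And>c. c \<in> rep_concepts D level C \<Longrightarrow> rep c \<in> N1 \<and> lay1 (rep c) = level c"
    and inj_rep: "inj_on rep (rep_concepts D level C)"
    and finite_N2: "finite N2"
    and finite_reps: "\<And>c. c \<in> rep_concepts D level C \<Longrightarrow> finite (reps c)"
    and card_reps: "\<And>c. c \<in> rep_concepts D level C \<Longrightarrow> card (reps c) \<le> m"
    and reps_disjoint: "\<And>c c'. c \<in> rep_concepts D level C \<Longrightarrow> c' \<in> rep_concepts D level C \<Longrightarrow>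
                          c \<noteq> c' \<Longrightarrow> reps c \<inter> reps c' = {}"
    and E_sub: "E \<subseteq> {(u, v). \<exists>c\<in>C. 1 \<le> level c \<and> v \<in> reps c \<and>
                                 (\<exists>c'\<in>children c. u \<in> reps c')}"
begin

abbreviation A2_fires :: "real \<Rightarrow> 'c set \<Rightarrow> 'n \<Rightarrow> nat \<Rightarrow> bool" where
  "A2_fires \<tau> B \<equiv> fires N1 lay1 (A2_weight level C children rep) \<tau> {} (rep ` B)"

abbreviation L_fires :: "real \<Rightarrow> 'm set \<Rightarrow> 'c set \<Rightarrow> 'm \<Rightarrow> nat \<Rightarrow> bool" where
  "L_fires \<tau> F B \<equiv> fires N2 lay2 (L_weight E) \<tau> F (\<Union>b\<in>B. reps b)"

lemma C_sub_rep_concepts: "C \<subseteq> rep_concepts D level C"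
  using C_sub by (auto simp: rep_concepts_def)

lemma children_rep_concepts:
  assumes "c \<in> C" "1 \<le> level c"
  shows "children c \<subseteq> rep_concepts D level C"
  using children_sub[OF assms] C_sub_rep_concepts by auto

lemma E_source_in_child:
  assumes "(u, v) \<in> E" and c: "c \<in> C" "v \<in> reps c"
  shows "\<exists>c'\<in>children c. u \<in> reps c'"
proof -
  obtain c'' where c'': "c'' \<in> C" "v \<in> reps c''" "\<exists>c'\<in>children c''. u \<in> reps c'"
    using assms(1) E_sub by blast
  have "c'' = c"
    using reps_disjoint c c'' C_sub_rep_concepts by blast
  with c'' show ?thesis by simp
qed

lemma card_active_children_A2:
  assumes c: "c \<in> C" "level c = Suc l" and silent: "\<not> A2_fires \<tau> B (rep c) (Suc l)"
  shows "real (card {c'\<in>children c. A2_fires \<tau> B (rep c') l}) < \<tau>"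
proof -
  define X where "X = {c'\<in>children c. A2_fires \<tau> B (rep c') l}"
  define S where "S = {u\<in>N1. lay1 u + 1 = lay1 (rep c) \<and>
    (\<exists>d\<in>C. 1 \<le> level d \<and> rep c = rep d \<and> (\<exists>c'\<in>children d. u = rep c')) \<and>
    A2_fires \<tau> B u l}"
  have "rep c \<in> N1" "lay1 (rep c) = Suc l"
    using rep_in c C_sub_rep_concepts by auto
  then have "real (card S) < \<tau>"
    using silent finite_N1
    by (simp add: S_def A2_weight_eq fires_Suc_of_bool_weights del: fires.simps)
  have X_rc: "X \<subseteq> rep_concepts D level C"
    using children_rep_concepts[of c] c by (auto simp: X_def)
  have "rep ` X \<subseteq> S"
  proof
    fix u assume "u \<in> rep ` X"
    then obtain c' where c': "c' \<in> children c" "A2_fires \<tau> B (rep c') l" "u = rep c'"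
      by (auto simp: X_def)
    have "level c' = l"
      using children_sub[of c] c c' by auto
    moreover have "rep c' \<in> N1" "lay1 (rep c') = level c'"
      using rep_in X_rc c' by (auto simp: X_def)
    moreover have "\<exists>d\<in>C. 1 \<le> level d \<and> rep c = rep d \<and> (\<exists>c''\<in>children d. u = rep c'')"
      using c c' by (intro bexI[of _ c]) auto
    ultimately show "u \<in> S"
      using c c' \<open>lay1 (rep c) = Suc l\<close> unfolding S_def by auto
  qed
  then have "card (rep ` X) \<le> card S"
    by (intro card_mono) (auto simp: S_def finite_N1)
  moreover have "card (rep ` X) = card X"
    using inj_rep X_rc by (simp add: card_image inj_on_subset)
  ultimately show ?thesis
    using \<open>real (card S) < \<tau>\<close> unfolding X_def by linarith
qed

lemma card_UN_reps_le:
  assumes "finite X" "X \<subseteq> rep_concepts D level C"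
  shows "card (\<Union>c\<in>X. reps c) \<le> m * card X"
proof -
  have "card (\<Union>c\<in>X. reps c) \<le> (\<Sum>c\<in>X. card (reps c))"
    using assms(1) by (rule card_UN_le)
  also have "\<dots> \<le> (\<Sum>c\<in>X. m)"
    using assms(2) card_reps by (intro sum_mono) auto
  finally show ?thesis by (simp add: mult.commute)
qed

lemma L_silent_at_0:
  assumes "B \<subseteq> rep_concepts D level C" "c \<in> rep_concepts D level C" "level c = 0"
    and "\<not> A2_fires \<tau>\<^sub>1 B (rep c) 0" "v \<in> reps c"
  shows "\<not> L_fires \<tau>\<^sub>2 F B v 0"
proof
  assume "L_fires \<tau>\<^sub>2 F B v 0"
  then obtain b where b: "b \<in> B" "v \<in> reps b" by auto
  with assms reps_disjoint have "b = c" by blast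
  with assms b rep_in show False by auto
qed

lemma card_active_in_neighbours_L:
  assumes c: "c \<in> C" "1 \<le> level c" and v: "v \<in> reps c"
    and dominated: "\<And>c' u. c' \<in> children c \<Longrightarrow> u \<in> reps c' \<Longrightarrow> L_fires \<tau>\<^sub>2 F B u l
                       \<Longrightarrow> A2_fires \<tau>\<^sub>1 B (rep c') l"
  shows "card {u\<in>N2. lay2 u + 1 = lay2 v \<and> (u, v) \<in> E \<and> L_fires \<tau>\<^sub>2 F B u l}
           \<le> m * card {c'\<in>children c. A2_fires \<tau>\<^sub>1 B (rep c') l}"
proof -
  define X where "X = {c'\<in>children c. A2_fires \<tau>\<^sub>1 B (rep c') l}"
  define S where "S = {u\<in>N2. lay2 u + 1 = lay2 v \<and> (u, v) \<in> E \<and> L_fires \<tau>\<^sub>2 F B u l}"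
  have X: "finite X" "X \<subseteq> rep_concepts D level C"
    using children_rep_concepts[OF c] finite_children[OF c] by (auto simp: X_def)
  have "S \<subseteq> (\<Union>c'\<in>X. reps c')"
  proof
    fix u assume "u \<in> S"
    then have "(u, v) \<in> E" "L_fires \<tau>\<^sub>2 F B u l"
      unfolding S_def by blast+
    then obtain c' where c': "c' \<in> children c" "u \<in> reps c'"
      using E_source_in_child[OF _ c(1) v] by blast
    with dominated \<open>L_fires \<tau>\<^sub>2 F B u l\<close> have "A2_fires \<tau>\<^sub>1 B (rep c') l"
      by blast
    with c' show "u \<in> (\<Union>c'\<in>X. reps c')"
      unfolding X_def by blast
  qed
  moreover have "finite (\<Union>c'\<in>X. reps c')"
    using X finite_reps by blast
  ultimately have "card S \<le> card (\<Union>c'\<in>X. reps c')"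
    by (rule card_mono[rotated])
  also have "\<dots> \<le> m * card X"
    using card_UN_reps_le[OF X] .
  finally show ?thesis
    unfolding S_def X_def .
qed

lemma L_silent_if_A2_silent:
  assumes B: "B \<subseteq> rep_concepts D level C" and "0 < m" and \<tau>: "real m * \<tau>\<^sub>1 \<le> \<tau>\<^sub>2"
  shows "c \<in> rep_concepts D level C \<Longrightarrow> \<not> A2_fires \<tau>\<^sub>1 B (rep c) (level c) \<Longrightarrow> v \<in> reps c
           \<Longrightarrow> \<not> L_fires \<tau>\<^sub>2 F B v (level c)"
proof (induction "level c" arbitrary: c v)
  case 0
  then show ?case using L_silent_at_0[OF B] by metis
next
  case (Suc l)
  then have c: "c \<in> C" "level c = Suc l"
    by (auto simp: rep_concepts_def)
  have "A2_fires \<tau>\<^sub>1 B (rep c') l"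
    if "c' \<in> children c" "u \<in> reps c'" "L_fires \<tau>\<^sub>2 F B u l" for c' u
  proof -
    have "c' \<in> rep_concepts D level C" "level c' = l"
      using that c children_rep_concepts[of c] children_sub[of c] by auto
    with Suc.hyps(1) that show ?thesis
      by blast
  qed
  then have "card {u\<in>N2. lay2 u + 1 = lay2 v \<and> (u, v) \<in> E \<and> L_fires \<tau>\<^sub>2 F B u l}
               \<le> m * card {c'\<in>children c. A2_fires \<tau>\<^sub>1 B (rep c') l}"
    using c Suc.prems(3) by (intro card_active_in_neighbours_L) simp_all
  then have "real (card {u\<in>N2. lay2 u + 1 = lay2 v \<and> (u, v) \<in> E \<and> L_fires \<tau>\<^sub>2 F B u l})
               \<le> real (m * card {c'\<in>children c. A2_fires \<tau>\<^sub>1 B (rep c') l})"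
    by (rule of_nat_mono)
  also have "\<dots> < real m * \<tau>\<^sub>1"
    using card_active_children_A2 c Suc.prems(2) \<open>0 < m\<close> by simp
  also have "\<dots> \<le> \<tau>\<^sub>2"
    by (rule \<tau>)
  finally show ?case
    using finite_N2 c by (simp add: L_weight_eq fires_Suc_of_bool_weights del: fires.simps)
qed

end

theorem theorem8p3:
  fixes D C :: "'c set" and level :: "'c \<Rightarrow> nat" and children :: "'c \<Rightarrow> 'c set"
    and lmax n k m :: nat and r1 r2 \<epsilon> a :: real
    and N1 :: "'n set" and lay1 :: "'n \<Rightarrow> nat" and rep :: "'c \<Rightarrow> 'n"
    and N2 :: "'m set" and lay2 :: "'m \<Rightarrow> nat" and reps :: "'c \<Rightarrow> 'm set"
    and E :: "('m \<times> 'm) set" and F :: "'m set"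
  assumes hier: "concept_hierarchy D level lmax n k C children"
    and r1: "0 \<le> r1" "r1 \<le> 1" and r2: "0 \<le> r2" "r2 \<le> 1"
    and eps: "0 \<le> \<epsilon>" "\<epsilon> \<le> 1"
    and a: "a > 0" and ra: "r1 \<le> a * r2 * (1 - \<epsilon>)"
    and m: "m \<ge> 1"
    \<comment> \<open>network A_2\<close>
    and N1_fin: "finite N1" and N1_lay: "\<forall>v\<in>N1. lay1 v \<le> lmax"
    and rep_in: "\<forall>c\<in>rep_concepts D level C. rep c \<in> N1 \<and> lay1 (rep c) = level c"
    and rep_inj: "inj_on rep (rep_concepts D level C)"
    \<comment> \<open>network L\<close>
    and N2_fin: "finite N2" and N2_lay: "\<forall>v\<in>N2. lay2 v \<le> lmax"
    and reps_in: "\<forall>c\<in>rep_concepts D level C.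
                    reps c \<subseteq> N2 \<and> (\<forall>v\<in>reps c. lay2 v = level c) \<and> card (reps c) = m"
    and reps_disj: "\<forall>c\<in>rep_concepts D level C. \<forall>c'\<in>rep_concepts D level C.
                    c \<noteq> c' \<longrightarrow> reps c \<inter> reps c' = {}"
    and E_sub: "E \<subseteq> {(u, v). \<exists>c\<in>C. 1 \<le> level c \<and> v \<in> reps c \<and>
                                     (\<exists>c'\<in>children c. u \<in> reps c')}"
    and F_sub: "F \<subseteq> N2"
    and F_bound: "\<forall>c\<in>rep_concepts D level C. real (card (reps c - F)) \<ge> real m * (1 - \<epsilon>)"
    and E_bound: "\<forall>c\<in>C. 1 \<le> level c \<longrightarrow> (\<forall>v\<in>reps c. \<forall>c'\<in>children c.
                    real (card {u\<in>reps c' - F. (u, v) \<in> E}) \<ge> a * real m * (1 - \<epsilon>))"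
  shows "\<forall>B\<subseteq>{c\<in>C. level c = 0}. \<forall>c\<in>rep_concepts D level C.
           \<not> fires N1 lay1 (A2_weight level C children rep) (r1 * real k) {} (rep ` B)
               (rep c) (level c)
           \<longrightarrow> (\<forall>v\<in>reps c. \<not> fires N2 lay2 (L_weight E) (a * r2 * real k * real m * (1 - \<epsilon>)) F
                              (\<Union>b\<in>B. reps b) v (level c))"
proof (intro allI impI ballI)
  fix B c v
  assume B: "B \<subseteq> {c\<in>C. level c = 0}" and c: "c \<in> rep_concepts D level C"
    and silent: "\<not> fires N1 lay1 (A2_weight level C children rep) (r1 * real k) {} (rep ` B)
                   (rep c) (level c)"
    and v: "v \<in> reps c"
  have "C \<subseteq> D"
    and "\<And>c. c \<in> C \<Longrightarrow> 1 \<le> level c \<Longrightarrow>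
           children c \<subseteq> {c'\<in>C. level c' = level c - 1} \<and> finite (children c)"
    using hier unfolding concept_hierarchy_def by auto
  moreover have "finite (reps c) \<and> card (reps c) \<le> m" if "c \<in> rep_concepts D level C" for c
    using reps_in that m by (auto intro: card_ge_0_finite)
  ultimately interpret hierarchy_networks D C level children N1 lay1 rep N2 lay2 reps E m
    using N1_fin rep_in rep_inj N2_fin reps_disj E_sub by unfold_locales blast+
  have "B \<subseteq> rep_concepts D level C"
    using B C_sub_rep_concepts by auto
  moreover have "0 < m"
    using m by simp
  moreover have "real m * (r1 * real k) \<le> a * r2 * real k * real m * (1 - \<epsilon>)"
    using mult_right_mono[OF ra, of "real k * real m"] by (simp add: algebra_simps)
  ultimately show "\<not> fires N2 lay2 (L_weight E) (a * r2 * real k * real m * (1 - \<epsilon>)) F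
                     (\<Union>b\<in>B. reps b) v (level c)"
    by (rule L_silent_if_A2_silent[OF _ _ _ c silent v])
qed

end
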